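(* Let $p^*\in(0,1)$ be the threshold belief of the insurance problem (the unique $p^*$ such that not insuring is optimal for $p<p^*$, the insuree is indifferent between not insuring and insuring at a positive indemnity at $p^*$, and insuring at a positive indemnity $\hat I(p)$ is strictly optimal for $p>p^*$). For $p\in(0,1)$ and small $\varepsilon>0$ define $\mathrm{VoI}(\varepsilon)=\tfrac12 v(p+\varepsilon)+\tfrac12 v(p-\varepsilon)-v(p)$. Then: (1) if $p<p^*$, $\mathrm{VoI}(\varepsilon)=0$ for all sufficiently small $\varepsilon>0$; (2) if $p=p^*$, there is a constant $C^*>0$ with $\mathrm{VoI}(\varepsilon)\sim C^*\varepsilon$ as $\varepsilon\to0$; (3) if $p>p^*$, there is a constant $C(p)>0$ with $\mathrm{VoI}(\varepsilon)\sim C(p)\varepsilon^2$ as $\varepsilon\to0$.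
   Context: Insurance model with parameters $\alpha\in(0,1)$, $f>0$, $\varpi>0$, $R>0$: premium $P(I)=\alpha I+f$, utility $u(w)=1-e^{-Rw}$; for probability of loss $q\in[0,1]$, $U_0(q)=(1-q)(1-e^{-R\varpi})$ (no insurance) and $U(q,I)=1-qe^{-R(I-P(I))}-(1-q)e^{-R(\varpi-P(I))}$ (insurance with indemnity $I\ge0$). The value function is $v(q)=\max\{U_0(q),\sup_{I\ge0}U(q,I)\}$. Here $f(\varepsilon)\sim g(\varepsilon)$ means $f(\varepsilon)/g(\varepsilon)\to1$. *)

theory Defs
  imports "HOL-Analysis.Analysis" "HOL-Library.Landau_Symbols"
begin

text \<open>Insurance model. Parameters: alpha in (0,1), fee f > 0, wealth w (varpi) > 0,
  risk aversion R > 0. Utility u(x) = 1 - exp(-R x).\<close>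

definition premium :: "real \<Rightarrow> real \<Rightarrow> real \<Rightarrow> real" where
  "premium \<alpha> f I = \<alpha> * I + f"

definition U0 :: "real \<Rightarrow> real \<Rightarrow> real \<Rightarrow> real" where
  "U0 R w q = (1 - q) * (1 - exp (- R * w))"

definition Uins :: "real \<Rightarrow> real \<Rightarrow> real \<Rightarrow> real \<Rightarrow> real \<Rightarrow> real \<Rightarrow> real" where
  "Uins \<alpha> f R w q I = 1 - q * exp (- R * (I - premium \<alpha> f I))
                         - (1 - q) * exp (- R * (w - premium \<alpha> f I))"

definition vfun :: "real \<Rightarrow> real \<Rightarrow> real \<Rightarrow> real \<Rightarrow> real \<Rightarrow> real" where
  "vfun \<alpha> f R w q = max (U0 R w q) (SUP I\<in>{0..}. Uins \<alpha> f R w q I)"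

definition VoI :: "real \<Rightarrow> real \<Rightarrow> real \<Rightarrow> real \<Rightarrow> real \<Rightarrow> real \<Rightarrow> real" where
  "VoI \<alpha> f R w p \<epsilon> = vfun \<alpha> f R w (p + \<epsilon>) / 2 + vfun \<alpha> f R w (p - \<epsilon>) / 2 - vfun \<alpha> f R w p"

end

theory Submission
  imports Defs
begin

text \<open>
  Below the threshold the value function v coincides with the affine no-insurance utility U0,
  so the information has no value. At the threshold, v - U0 vanishes to the left and to the
  right is convex (v is a supremum of functions affine in the belief) and bounded below by the
  gain from insuring at the indifference indemnity, which is linear with positive slope; hence
  it has a positive right derivative and VoI is linear in the spread. Above the threshold the
  first-order condition for the optimal indemnity yields the closed form
  v(q) = 1 - M q^\<alpha> (1 - q)^(1 - \<alpha>) with M > 0, whose second derivative is negative, so VoI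
  is quadratic in the spread.
\<close>

lemma asymp_equiv_const_mult_if_tendsto:
  fixes g h :: "'a \<Rightarrow> real"
  assumes "((\<lambda>x. g x / h x) \<longlongrightarrow> C) F" "C \<noteq> 0"
  shows "g \<sim>[F] (\<lambda>x. C * h x)"
proof (rule asymp_equivI')
  have "((\<lambda>x. g x / h x / C) \<longlongrightarrow> C / C) F"
    using assms by (intro tendsto_divide tendsto_const) auto
  then show "((\<lambda>x. g x / (C * h x)) \<longlongrightarrow> 1) F"
    using assms(2) by (simp add: mult.commute)
qed

lemma convex_on_slope_tendsto_at_right_0:
  fixes h :: "real \<Rightarrow> real"
  assumes cvx: "convex_on {0..d} h" and "d > 0" "h 0 = 0"
    and lower: "\<And>\<epsilon>. 0 < \<epsilon> \<Longrightarrow> \<epsilon> \<le> d \<Longrightarrow> s * \<epsilon> \<le> h \<epsilon>"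
  shows "\<exists>L\<ge>s. ((\<lambda>\<epsilon>. h \<epsilon> / \<epsilon>) \<longlongrightarrow> L) (at_right 0)"
proof -
  define Q where "Q \<epsilon> = h \<epsilon> / \<epsilon>" for \<epsilon>
  have mono: "Q a \<le> Q b" if "a \<in> {..<d}" "b \<in> {..<d}" "0 < a" "a \<le> b" for a b
  proof (cases "a = b")
    case False
    then have "(h 0 - h a) / (0 - a) \<le> (h 0 - h b) / (0 - b)"
      using that by (intro convex_on_slope_le(1)[OF cvx]) auto
    with \<open>h 0 = 0\<close> show ?thesis by (simp add: Q_def)
  qed simp
  have bound: "s \<le> Q a" if "a \<in> {..<d}" "0 < a" for a
    using lower[of a] that by (simp add: Q_def field_simps)
  have "at (0::real) within ({0<..} \<inter> {..<d}) = at_right 0"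
    by (rule at_within_nhd[where S = "{-d<..<d}"]) (use \<open>d > 0\<close> in auto)
  then have lim: "(Q \<longlongrightarrow> Inf (Q ` ({0<..} \<inter> {..<d}))) (at_right 0)"
    using Lim_right_bound[of "{..<d}" 0 Q s] mono bound by metis
  moreover have "eventually (\<lambda>\<epsilon>. s \<le> Q \<epsilon>) (at_right 0)"
    using eventually_at_right_real[OF \<open>d > 0\<close>] by eventually_elim (auto intro: bound)
  ultimately have "s \<le> Inf (Q ` ({0<..} \<inter> {..<d}))"
    by (rule tendsto_lowerbound) simp
  with lim show ?thesis unfolding Q_def by blast
qed

lemma second_symmetric_difference_tendsto:
  fixes g g' :: "real \<Rightarrow> real"
  assumes "d > 0"
    and g': "\<And>x. \<bar>x - p\<bar> < d \<Longrightarrow> (g has_real_derivative g' x) (at x)"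
    and g'': "(g' has_real_derivative g'') (at p)"
  shows "((\<lambda>\<epsilon>. (g (p + \<epsilon>) + g (p - \<epsilon>) - 2 * g p) / \<epsilon>\<^sup>2) \<longlongrightarrow> g'') (at_right 0)"
proof -
  define N where "N \<epsilon> = g (p + \<epsilon>) + g (p - \<epsilon>) - 2 * g p" for \<epsilon>
  define \<Phi> where "\<Phi> \<epsilon> = g' (p + \<epsilon>) - g' (p - \<epsilon>)" for \<epsilon>
  have shift: "((\<lambda>\<epsilon>. p + \<epsilon>) has_real_derivative 1) (at x)"
    "((\<lambda>\<epsilon>. p - \<epsilon>) has_real_derivative -1) (at x)" for x
    by (auto intro!: derivative_eq_intros)
  have dN: "(N has_real_derivative \<Phi> \<epsilon>) (at \<epsilon>)" if "\<bar>\<epsilon>\<bar> < d" for \<epsilon>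
  proof -
    have "((\<lambda>\<epsilon>. g (p + \<epsilon>)) has_real_derivative g' (p + \<epsilon>) * 1) (at \<epsilon>)"
      by (rule DERIV_chain2[OF g' shift(1)]) (use that in simp)
    moreover have "((\<lambda>\<epsilon>. g (p - \<epsilon>)) has_real_derivative g' (p - \<epsilon>) * -1) (at \<epsilon>)"
      by (rule DERIV_chain2[OF g' shift(2)]) (use that in simp)
    ultimately have "(N has_real_derivative g' (p + \<epsilon>) * 1 + g' (p - \<epsilon>) * -1 - 0) (at \<epsilon>)"
      unfolding N_def[abs_def] by (intro DERIV_diff DERIV_add DERIV_const)
    then show ?thesis by (simp add: \<Phi>_def)
  qed
  have "(\<Phi> has_real_derivative g'' * 1 - g'' * -1) (at 0)"
    unfolding \<Phi>_def[abs_def]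
    by (intro DERIV_diff DERIV_chain2[OF _ shift(1)] DERIV_chain2[OF _ shift(2)])
      (simp_all add: g'')
  from DERIV_D[OF this] have "((\<lambda>\<epsilon>. \<Phi> \<epsilon> / \<epsilon> / 2) \<longlongrightarrow> (g'' * 1 - g'' * -1) / 2) (at 0)"
    by (intro tendsto_divide tendsto_const) (simp_all add: \<Phi>_def)
  then have "((\<lambda>\<epsilon>. \<Phi> \<epsilon> / (2 * \<epsilon>)) \<longlongrightarrow> g'') (at 0)"
    by (simp add: field_simps)
  then have lim\<Phi>: "((\<lambda>\<epsilon>. \<Phi> \<epsilon> / (2 * \<epsilon>)) \<longlongrightarrow> g'') (at_right 0)"
    by (rule tendsto_mono[OF at_le, rotated]) simp
  have ev: "eventually (\<lambda>\<epsilon>. 0 < \<epsilon> \<and> \<epsilon> < d) (at_right (0::real))"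
    using eventually_at_right_real[OF \<open>d > 0\<close>] by simp
  have "isCont N 0"
    using dN[of 0] \<open>d > 0\<close> by (intro DERIV_isCont) auto
  then have "(N \<longlongrightarrow> 0) (at_right 0)"
    by (auto simp: isCont_def N_def intro: tendsto_mono[OF at_le])
  then have "((\<lambda>\<epsilon>. N \<epsilon> / \<epsilon>\<^sup>2) \<longlongrightarrow> g'') (at_right 0)"
  proof (rule lhopital_right_0[OF _ _ _ _ _ _ lim\<Phi>])
    show "((\<lambda>\<epsilon>::real. \<epsilon>\<^sup>2) \<longlongrightarrow> 0) (at_right 0)"
      by (rule tendsto_mono[OF at_le, rotated]) (auto intro!: tendsto_eq_intros)
    show "eventually (\<lambda>\<epsilon>::real. \<epsilon>\<^sup>2 \<noteq> 0) (at_right 0)"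
      using ev by (rule eventually_mono) simp
    show "eventually (\<lambda>\<epsilon>::real. 2 * \<epsilon> \<noteq> 0) (at_right 0)"
      using ev by (rule eventually_mono) simp
    show "eventually (\<lambda>\<epsilon>. DERIV N \<epsilon> :> \<Phi> \<epsilon>) (at_right 0)"
      using ev by (rule eventually_mono) (simp add: dN)
    show "eventually (\<lambda>\<epsilon>. DERIV (\<lambda>\<epsilon>. \<epsilon>\<^sup>2) \<epsilon> :> 2 * \<epsilon>) (at_right 0)"
      by (intro always_eventually allI) (rule derivative_eq_intros refl | simp)+
  qed
  then show ?thesis by (simp add: N_def)
qed

definition weighted_geomean :: "real \<Rightarrow> real \<Rightarrow> real" where
  "weighted_geomean a q = q powr a * (1 - q) powr (1 - a)"

definition weighted_geomean' :: "real \<Rightarrow> real \<Rightarrow> real" where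
  "weighted_geomean' a q =
     a * q powr (a - 1) * (1 - q) powr (1 - a) - (1 - a) * q powr a * (1 - q) powr (- a)"

definition weighted_geomean'' :: "real \<Rightarrow> real \<Rightarrow> real" where
  "weighted_geomean'' a q = - a * (1 - a) * q powr (a - 2) * (1 - q) powr (- a - 1)"

lemma has_real_derivative_powr_mult_powr:
  fixes q b c :: real
  assumes "0 < q" "q < 1"
  shows "((\<lambda>q. q powr b * (1 - q) powr c) has_real_derivative
           b * q powr (b - 1) * (1 - q) powr c - c * q powr b * (1 - q) powr (c - 1)) (at q)"
  using assms by (auto intro!: derivative_eq_intros simp: algebra_simps)

lemma weighted_geomean_deriv:
  "0 < q \<Longrightarrow> q < 1 \<Longrightarrow> (weighted_geomean a has_real_derivative weighted_geomean' a q) (at q)"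
  unfolding weighted_geomean_def[abs_def] weighted_geomean'_def
  using has_real_derivative_powr_mult_powr[of q a "1 - a"] by (simp add: algebra_simps)

lemma weighted_geomean'_deriv:
  assumes "0 < q" "q < 1"
  shows "(weighted_geomean' a has_real_derivative weighted_geomean'' a q) (at q)"
proof -
  have powr_shift: "x powr (b + real n) = x ^ n * x powr b" if "x > 0" for x b :: real and n
    using that by (simp add: powr_add powr_realpow)
  have "weighted_geomean' a =
      (\<lambda>q. a * (q powr (a - 1) * (1 - q) powr (1 - a)) - (1 - a) * (q powr a * (1 - q) powr (- a)))"
    by (simp add: fun_eq_iff weighted_geomean'_def mult.assoc)
  then have D: "(weighted_geomean' a has_real_derivative
      a * ((a - 1) * q powr (a - 2) * (1 - q) powr (1 - a)
           - (1 - a) * q powr (a - 1) * (1 - q) powr (- a))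
      - (1 - a) * (a * q powr (a - 1) * (1 - q) powr (- a)
           - (- a) * q powr a * (1 - q) powr (- a - 1))) (at q)"
    using has_real_derivative_powr_mult_powr[OF assms, of "a - 1" "1 - a"]
      has_real_derivative_powr_mult_powr[OF assms, of a "- a"]
    by (simp only:) (intro DERIV_diff DERIV_cmult, simp_all add: diff_diff_eq)
  \<comment> \<open>Factoring out q^(a-2) (1-q)^(-a-1) leaves -a(1-a)((1-q)^2 + 2q(1-q) + q^2) = -a(1-a).\<close>
  have E: "q powr (a - 1) = q * q powr (a - 2)" "q powr a = q\<^sup>2 * q powr (a - 2)"
    "(1 - q) powr (1 - a) = (1 - q)\<^sup>2 * (1 - q) powr (- a - 1)"
    "(1 - q) powr (- a) = (1 - q) * (1 - q) powr (- a - 1)"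
    using powr_shift[of q "a - 2" 1] powr_shift[of q "a - 2" 2] powr_shift[of "1 - q" "- a - 1" 2]
      powr_shift[of "1 - q" "- a - 1" 1] assms by simp_all
  show ?thesis
    using D unfolding weighted_geomean''_def E
    by (rule DERIV_cong) (simp add: algebra_simps power2_eq_square)
qed

lemma mult_powr_odds:
  fixes q Y a :: real
  assumes "0 < q" "q < 1" "0 < Y"
  shows "q * (q * Y / (1 - q)) powr (a - 1) = Y powr (a - 1) * weighted_geomean a q"
proof -
  have "q * q powr (a - 1) = q powr a" "(1 - q) powr (1 - a) = inverse ((1 - q) powr (a - 1))"
    using assms by (simp_all add: powr_diff powr_minus flip: powr_minus_divide)
  then show ?thesis
    using assms by (simp add: weighted_geomean_def powr_mult powr_divide field_simps)
qed

lemma Uins_le_one: "0 \<le> q \<Longrightarrow> q \<le> 1 \<Longrightarrow> Uins \<alpha> f R w q I \<le> 1"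
  unfolding Uins_def by (smt (verit) exp_gt_zero mult_nonneg_nonneg)

lemma Uins_le_vfun:
  assumes "0 \<le> q" "q \<le> 1" "0 \<le> I"
  shows "Uins \<alpha> f R w q I \<le> vfun \<alpha> f R w q"
proof -
  have "Uins \<alpha> f R w q I \<le> (SUP J\<in>{0..}. Uins \<alpha> f R w q J)"
    using assms Uins_le_one by (intro cSUP_upper bdd_aboveI2) auto
  then show ?thesis
    unfolding vfun_def by linarith
qed

lemma U0_le_vfun: "U0 R w q \<le> vfun \<alpha> f R w q"
  unfolding vfun_def by simp

lemma Uins_affine:
  "Uins \<alpha> f R w ((1 - t) * x + t * y) I = (1 - t) * Uins \<alpha> f R w x I + t * Uins \<alpha> f R w y I"
  unfolding Uins_def by (simp add: algebra_simps)

lemma U0_affine: "U0 R w ((1 - t) * x + t * y) = (1 - t) * U0 R w x + t * U0 R w y"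
  unfolding U0_def by (simp add: algebra_simps)

lemma U0_midpoint: "U0 R w (p + \<epsilon>) / 2 + U0 R w (p - \<epsilon>) / 2 = U0 R w p"
  unfolding U0_def by (simp add: field_simps)

lemma convex_on_vfun: "convex_on {0..1} (vfun \<alpha> f R w)"
proof (rule convex_onI)
  fix t x y :: real
  assume t: "0 < t" "t < 1" and xy: "x \<in> {0..1}" "y \<in> {0..1}"
  let ?r = "(1 - t) * vfun \<alpha> f R w x + t * vfun \<alpha> f R w y"
  have "U0 R w ((1 - t) * x + t * y) \<le> ?r"
    unfolding U0_affine using t by (intro add_mono mult_left_mono U0_le_vfun) auto
  moreover have "(SUP I\<in>{0..}. Uins \<alpha> f R w ((1 - t) * x + t * y) I) \<le> ?r"
    by (rule cSUP_least)
      (use t xy in \<open>auto simp: Uins_affine intro!: add_mono mult_left_mono Uins_le_vfun\<close>)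
  ultimately show "vfun \<alpha> f R w ((1 - t) *\<^sub>R x + t *\<^sub>R y) \<le> ?r"
    unfolding vfun_def by simp
qed simp

lemma VoI_below_threshold:
  assumes "0 < p" "p < pstar" and below: "\<forall>q\<in>{0..<pstar}. vfun \<alpha> f R w q = U0 R w q"
  shows "eventually (\<lambda>\<epsilon>. VoI \<alpha> f R w p \<epsilon> = 0) (at_right 0)"
  using eventually_at_right_real[of 0 "min p (pstar - p)"] assms
  by (auto elim!: eventually_mono simp: VoI_def U0_midpoint)

lemma Uins_deriv:
  "((\<lambda>I. Uins \<alpha> f R w q I) has_real_derivative
     q * R * (1 - \<alpha>) * exp (- R * (I - premium \<alpha> f I))
     - (1 - q) * R * \<alpha> * exp (- R * (w - premium \<alpha> f I))) (at I)"
  unfolding Uins_def premium_def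
  by (rule derivative_eq_intros refl | simp add: algebra_simps)+

lemma Uins_first_order_condition:
  assumes "R > 0" "I > 0" and max: "\<And>J. 0 \<le> J \<Longrightarrow> Uins \<alpha> f R w q J \<le> Uins \<alpha> f R w q I"
  shows "q * (1 - \<alpha>) * exp (- R * (I - premium \<alpha> f I))
       = (1 - q) * \<alpha> * exp (- R * (w - premium \<alpha> f I))"
proof -
  have "q * R * (1 - \<alpha>) * exp (- R * (I - premium \<alpha> f I))
      - (1 - q) * R * \<alpha> * exp (- R * (w - premium \<alpha> f I)) = 0"
    by (rule DERIV_local_max[OF Uins_deriv \<open>I > 0\<close>]) (auto intro: max)
  then have "R * (q * (1 - \<alpha>) * exp (- R * (I - premium \<alpha> f I))
      - (1 - q) * \<alpha> * exp (- R * (w - premium \<alpha> f I))) = 0"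
    by (simp add: algebra_simps)
  then show ?thesis
    using \<open>R > 0\<close> by simp
qed

lemma Uins_at_interior_optimum:
  assumes "0 < \<alpha>" "\<alpha> < 1" "R > 0" "0 < q" "q < 1" "I > 0"
    and max: "\<And>J. 0 \<le> J \<Longrightarrow> Uins \<alpha> f R w q J \<le> Uins \<alpha> f R w q I"
  shows "Uins \<alpha> f R w q I
    = 1 - exp (R * f) / \<alpha> * ((1 - \<alpha>) * exp (R * w) / \<alpha>) powr (\<alpha> - 1) * weighted_geomean \<alpha> q"
proof -
  define E1 where "E1 = exp (- R * (I - premium \<alpha> f I))"
  define E2 where "E2 = exp (- R * (w - premium \<alpha> f I))"
  define Y where "Y = (1 - \<alpha>) * exp (R * w) / \<alpha>"
  have foc: "q * (1 - \<alpha>) * E1 = (1 - q) * \<alpha> * E2"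
    unfolding E1_def E2_def using assms by (intro Uins_first_order_condition) auto
  have "E2 = E1 * exp (R * I) / exp (R * w)"
    unfolding E1_def E2_def premium_def by (simp add: algebra_simps flip: exp_add exp_diff)
  with foc have "E1 * (q * (1 - \<alpha>) * exp (R * w)) = E1 * ((1 - q) * \<alpha> * exp (R * I))"
    by (simp add: field_simps)
  then have "q * (1 - \<alpha>) * exp (R * w) = (1 - q) * \<alpha> * exp (R * I)"
    by (simp add: E1_def)
  then have expRI: "exp (R * I) = q * Y / (1 - q)"
    using assms by (simp add: Y_def field_simps)
  have "E1 = exp (R * f) * exp (R * I) powr (\<alpha> - 1)"
    unfolding E1_def premium_def powr_def by (simp add: algebra_simps flip: exp_add)
  then have "q * E1 = exp (R * f) * Y powr (\<alpha> - 1) * weighted_geomean \<alpha> q"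
    unfolding expRI using mult_powr_odds[of q Y \<alpha>] assms by (simp add: Y_def)
  moreover have "Uins \<alpha> f R w q I = 1 - q * E1 / \<alpha>"
    unfolding Uins_def E1_def[symmetric] E2_def[symmetric]
    using foc assms by (simp add: field_simps)
  ultimately show ?thesis
    by (simp add: Y_def)
qed

lemma Uins_minus_U0_linear:
  assumes "0 < \<alpha>" "f > 0" "R > 0" "I \<ge> 0" "pstar > 0"
    and "Uins \<alpha> f R w pstar I = U0 R w pstar"
  shows "\<exists>c>0. \<forall>q. Uins \<alpha> f R w q I - U0 R w q = c * (q - pstar)"
proof -
  define gain where "gain q = Uins \<alpha> f R w q I - U0 R w q" for q
  define c where "c = gain 1 - gain 0"
  have gain_affine: "gain q = gain 0 + c * q" for q
    unfolding gain_def c_def Uins_def U0_def by (simp add: algebra_simps)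
  have "0 < premium \<alpha> f I"
    unfolding premium_def using assms by (intro add_nonneg_pos mult_nonneg_nonneg) auto
  then have "gain 0 < 0"
    unfolding gain_def Uins_def U0_def using \<open>R > 0\<close> by simp
  moreover have "gain pstar = 0"
    unfolding gain_def using assms by simp
  ultimately have "c > 0"
    using gain_affine[of pstar] \<open>pstar > 0\<close> by (smt (verit) mult_nonpos_nonneg)
  moreover have "gain q = c * (q - pstar)" for q
    using gain_affine[of q] gain_affine[of pstar] \<open>gain pstar = 0\<close> by (simp add: algebra_simps)
  ultimately show ?thesis
    unfolding gain_def by blast
qed

lemma convex_on_vfun_minus_U0_shifted:
  assumes "0 \<le> p"
  shows "convex_on {0..1 - p} (\<lambda>\<epsilon>. vfun \<alpha> f R w (p + \<epsilon>) - U0 R w (p + \<epsilon>))"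
proof (rule convex_onI)
  fix t x y :: real
  assume "0 < t" "t < 1" "x \<in> {0..1 - p}" "y \<in> {0..1 - p}"
  then have "vfun \<alpha> f R w ((1 - t) * (p + x) + t * (p + y))
      \<le> (1 - t) * vfun \<alpha> f R w (p + x) + t * vfun \<alpha> f R w (p + y)"
    using assms by (intro convex_onD[OF convex_on_vfun, simplified]) auto
  moreover have "p + ((1 - t) * x + t * y) = (1 - t) * (p + x) + t * (p + y)"
    by (simp add: algebra_simps)
  ultimately show "vfun \<alpha> f R w (p + ((1 - t) *\<^sub>R x + t *\<^sub>R y))
        - U0 R w (p + ((1 - t) *\<^sub>R x + t *\<^sub>R y))
      \<le> (1 - t) * (vfun \<alpha> f R w (p + x) - U0 R w (p + x))
        + t * (vfun \<alpha> f R w (p + y) - U0 R w (p + y))"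
    unfolding real_scaleR_def by (simp only: U0_affine) argo
qed simp

lemma VoI_at_threshold:
  assumes "0 < \<alpha>" "f > 0" "R > 0" "0 < pstar" "pstar < 1"
    and below: "\<forall>q\<in>{0..<pstar}. vfun \<alpha> f R w q = U0 R w q"
    and at: "vfun \<alpha> f R w pstar = U0 R w pstar" "I0 > 0" "Uins \<alpha> f R w pstar I0 = U0 R w pstar"
  shows "\<exists>C>0. (\<lambda>\<epsilon>. VoI \<alpha> f R w pstar \<epsilon>) \<sim>[at_right 0] (\<lambda>\<epsilon>. C * \<epsilon>)"
proof -
  define h where "h \<epsilon> = vfun \<alpha> f R w (pstar + \<epsilon>) - U0 R w (pstar + \<epsilon>)" for \<epsilon>
  obtain c where "c > 0" and gain: "\<And>q. Uins \<alpha> f R w q I0 - U0 R w q = c * (q - pstar)"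
    using Uins_minus_U0_linear[of \<alpha> f R I0 pstar w] assms by auto
  have "c * \<epsilon> \<le> h \<epsilon>" if "0 < \<epsilon>" "\<epsilon> \<le> 1 - pstar" for \<epsilon>
    using Uins_le_vfun[of "pstar + \<epsilon>" I0 \<alpha> f R w] gain[of "pstar + \<epsilon>"] that assms
    unfolding h_def by simp
  moreover have "h 0 = 0"
    unfolding h_def using at by simp
  ultimately obtain L where "L \<ge> c" and L: "((\<lambda>\<epsilon>. h \<epsilon> / \<epsilon>) \<longlongrightarrow> L) (at_right 0)"
    using convex_on_slope_tendsto_at_right_0[of "1 - pstar" h c] assms
      convex_on_vfun_minus_U0_shifted[of pstar \<alpha> f R w]
    unfolding h_def by auto
  have "eventually (\<lambda>\<epsilon>. h \<epsilon> / \<epsilon> / 2 = VoI \<alpha> f R w pstar \<epsilon> / \<epsilon>) (at_right 0)"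
    using eventually_at_right_real[OF \<open>pstar > 0\<close>]
  proof eventually_elim
    case (elim \<epsilon>)
    then have "vfun \<alpha> f R w (pstar - \<epsilon>) = U0 R w (pstar - \<epsilon>)"
      using below by auto
    with at show ?case
      using U0_midpoint[of R w pstar \<epsilon>] by (simp add: VoI_def h_def field_simps)
  qed
  moreover have "((\<lambda>\<epsilon>. h \<epsilon> / \<epsilon> / 2) \<longlongrightarrow> L / 2) (at_right 0)"
    using L by (intro tendsto_divide tendsto_const) auto
  ultimately have "((\<lambda>\<epsilon>. VoI \<alpha> f R w pstar \<epsilon> / \<epsilon>) \<longlongrightarrow> L / 2) (at_right 0)"
    by (rule Lim_transform_eventually[rotated])
  then have "(\<lambda>\<epsilon>. VoI \<alpha> f R w pstar \<epsilon>) \<sim>[at_right 0] (\<lambda>\<epsilon>. L / 2 * \<epsilon>)"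
    using \<open>L \<ge> c\<close> \<open>c > 0\<close> by (intro asymp_equiv_const_mult_if_tendsto) auto
  then show ?thesis
    using \<open>L \<ge> c\<close> \<open>c > 0\<close> by (intro exI[of _ "L / 2"]) auto
qed

lemma VoI_above_threshold:
  assumes "0 < \<alpha>" "\<alpha> < 1" "R > 0" "0 \<le> pstar" "pstar < p" "p < 1"
    and above: "\<forall>q\<in>{pstar<..<1}. \<exists>I>0. Uins \<alpha> f R w q I = vfun \<alpha> f R w q
                  \<and> (\<forall>J\<ge>0. J \<noteq> I \<longrightarrow> Uins \<alpha> f R w q J < Uins \<alpha> f R w q I)"
  shows "\<exists>C>0. (\<lambda>\<epsilon>. VoI \<alpha> f R w p \<epsilon>) \<sim>[at_right 0] (\<lambda>\<epsilon>. C * \<epsilon>\<^sup>2)"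
proof -
  define M where "M = exp (R * f) / \<alpha> * ((1 - \<alpha>) * exp (R * w) / \<alpha>) powr (\<alpha> - 1)"
  have "M > 0"
    unfolding M_def using assms by simp
  have v: "vfun \<alpha> f R w q = 1 - M * weighted_geomean \<alpha> q" if "pstar < q" "q < 1" for q
  proof -
    from that above obtain I where "I > 0" "Uins \<alpha> f R w q I = vfun \<alpha> f R w q"
      "\<forall>J\<ge>0. J \<noteq> I \<longrightarrow> Uins \<alpha> f R w q J < Uins \<alpha> f R w q I"
      by (meson greaterThanLessThan_iff)
    with Uins_at_interior_optimum[of \<alpha> R q I f w] show ?thesis
      using assms that unfolding M_def by (fastforce simp: less_imp_le)
  qed
  define d where "d = min (p - pstar) (1 - p)"
  have "d > 0"
    unfolding d_def using assms by simp
  have "((\<lambda>\<epsilon>. (weighted_geomean \<alpha> (p + \<epsilon>) + weighted_geomean \<alpha> (p - \<epsilon>)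
        - 2 * weighted_geomean \<alpha> p) / \<epsilon>\<^sup>2)
      \<longlongrightarrow> weighted_geomean'' \<alpha> p) (at_right 0)"
    using \<open>d > 0\<close> assms
    by (intro second_symmetric_difference_tendsto[where d = d and g' = "weighted_geomean' \<alpha>"]
        weighted_geomean_deriv weighted_geomean'_deriv)
      (auto simp: d_def)
  then have lim: "((\<lambda>\<epsilon>. VoI \<alpha> f R w p \<epsilon> / \<epsilon>\<^sup>2) \<longlongrightarrow> - M / 2 * weighted_geomean'' \<alpha> p) (at_right 0)"
  proof (rule Lim_transform_eventually[OF tendsto_mult[OF tendsto_const]])
    show "eventually (\<lambda>\<epsilon>. - M / 2 * ((weighted_geomean \<alpha> (p + \<epsilon>) + weighted_geomean \<alpha> (p - \<epsilon>)
        - 2 * weighted_geomean \<alpha> p) / \<epsilon>\<^sup>2) = VoI \<alpha> f R w p \<epsilon> / \<epsilon>\<^sup>2) (at_right 0)"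
      using eventually_at_right_real[OF \<open>d > 0\<close>]
      by eventually_elim (simp add: VoI_def v d_def assms field_simps)
  qed
  have pos: "- M / 2 * weighted_geomean'' \<alpha> p > 0"
    using \<open>M > 0\<close> assms by (simp add: weighted_geomean''_def mult_pos_neg)
  have "(\<lambda>\<epsilon>. VoI \<alpha> f R w p \<epsilon>) \<sim>[at_right 0] (\<lambda>\<epsilon>. (- M / 2 * weighted_geomean'' \<alpha> p) * \<epsilon>\<^sup>2)"
    by (rule asymp_equiv_const_mult_if_tendsto[OF lim]) (use pos in linarith)
  with pos show ?thesis
    by blast
qed

theorem proposition4p2:
  fixes \<alpha> f w R pstar :: real
  assumes "0 < \<alpha>" "\<alpha> < 1" "f > 0" "w > 0" "R > 0"
    and "0 < pstar" "pstar < 1"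
    and below: "\<forall>q\<in>{0..<pstar}. vfun \<alpha> f R w q = U0 R w q"
    and at: "vfun \<alpha> f R w pstar = U0 R w pstar \<and>
             (\<exists>I>0. Uins \<alpha> f R w pstar I = U0 R w pstar)"
    and above: "\<forall>q\<in>{pstar<..<1}. \<exists>I>0. Uins \<alpha> f R w q I = vfun \<alpha> f R w q
                  \<and> U0 R w q < Uins \<alpha> f R w q I
                  \<and> (\<forall>J\<ge>0. J \<noteq> I \<longrightarrow> Uins \<alpha> f R w q J < Uins \<alpha> f R w q I)"
  shows "(\<forall>p\<in>{0<..<pstar}. eventually (\<lambda>\<epsilon>. VoI \<alpha> f R w p \<epsilon> = 0) (at_right 0))
       \<and> (\<exists>C>0. (\<lambda>\<epsilon>. VoI \<alpha> f R w pstar \<epsilon>) \<sim>[at_right 0] (\<lambda>\<epsilon>. C * \<epsilon>))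
       \<and> (\<forall>p\<in>{pstar<..<1}. \<exists>C>0. (\<lambda>\<epsilon>. VoI \<alpha> f R w p \<epsilon>) \<sim>[at_right 0] (\<lambda>\<epsilon>. C * \<epsilon>^2))"
proof (intro conjI ballI)
  show "eventually (\<lambda>\<epsilon>. VoI \<alpha> f R w p \<epsilon> = 0) (at_right 0)" if "p \<in> {0<..<pstar}" for p
    using VoI_below_threshold below that by auto
  obtain I0 where "I0 > 0" "Uins \<alpha> f R w pstar I0 = U0 R w pstar"
    using at by blast
  then show "\<exists>C>0. (\<lambda>\<epsilon>. VoI \<alpha> f R w pstar \<epsilon>) \<sim>[at_right 0] (\<lambda>\<epsilon>. C * \<epsilon>)"
    using VoI_at_threshold assms by blast
  have "\<forall>q\<in>{pstar<..<1}. \<exists>I>0. Uins \<alpha> f R w q I = vfun \<alpha> f R w q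
      \<and> (\<forall>J\<ge>0. J \<noteq> I \<longrightarrow> Uins \<alpha> f R w q J < Uins \<alpha> f R w q I)"
    using above by blast
  then show "\<exists>C>0. (\<lambda>\<epsilon>. VoI \<alpha> f R w p \<epsilon>) \<sim>[at_right 0] (\<lambda>\<epsilon>. C * \<epsilon>^2)" if "p \<in> {pstar<..<1}" for p
    using VoI_above_threshold[of \<alpha> R pstar p] assms that by auto
qed

end
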